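(* Let $U:(0,\infty)\to\mathbb R$ be a utility function satisfying Assumption 2. Let $\xi>0$ be a random variable with $\mathbb E[|U(\xi)|]<\infty$, and let $\eta=(\eta^i)_{0\le i\le m}$ be an $(m+1)$-dimensional random vector such that $\eta^i\ge-K\xi$ for $0\le i\le m$ and some constant $K>0$, and $\mathbb E[-U''(\xi)\|\eta\|^2]<\infty$. Then $w(s):=\mathbb E[U(\xi+\langle s,\eta\rangle)]$ is well defined for $s\in\mathbb R^{m+1}$ with $0\le s^i<\frac{1}{K(m+1)}$, $0\le i\le m$, and, as $s\to0$ within this set, $$w(s)=w(0)+\mathbb E[U'(\xi)\langle\eta,s\rangle]+\tfrac12\mathbb E[U''(\xi)\langle\eta,s\rangle^2]+o(\|s\|^2).$$
   Context: A utility function here is $U:(0,\infty)\to\mathbb R$ strictly increasing, strictly concave, continuously differentiable, with $U'(0+)=\infty$, $U'(\infty)=0$. Assumption 2: $U$ is twice continuously differentiable and $c_1<-xU''(x)/U'(x)<c_2$ for all $x>0$, for constants $0<c_1<c_2<\infty$. *)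

theory Defs
  imports "HOL-Analysis.Analysis" "HOL-Probability.Probability" "HOL-Library.Landau_Symbols"
begin

definition strictly_concave_on :: "real set \<Rightarrow> (real \<Rightarrow> real) \<Rightarrow> bool" where
  "strictly_concave_on S f \<longleftrightarrow>
     (\<forall>x\<in>S. \<forall>y\<in>S. \<forall>t. x \<noteq> y \<and> 0 < t \<and> t < 1 \<longrightarrow>
        (1 - t) * f x + t * f y < f ((1 - t) * x + t * y))"

text \<open>A utility function U on (0,oo) with first derivative U1 and second derivative U2,
  satisfying Assumption 2. Values of U, U1, U2 outside (0,oo) are irrelevant.\<close>
definition utility_A2 :: "(real \<Rightarrow> real) \<Rightarrow> (real \<Rightarrow> real) \<Rightarrow> (real \<Rightarrow> real) \<Rightarrow> bool" where
  "utility_A2 U U1 U2 \<longleftrightarrow>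
     strict_mono_on {0<..} U \<and>
     strictly_concave_on {0<..} U \<and>
     (\<forall>x>0. (U has_real_derivative U1 x) (at x)) \<and>
     continuous_on {0<..} U1 \<and>
     filterlim U1 at_top (at_right 0) \<and>
     (U1 \<longlongrightarrow> 0) at_top \<and>
     (\<forall>x>0. (U1 has_real_derivative U2 x) (at x)) \<and>
     continuous_on {0<..} U2 \<and>
     (\<exists>c1 c2. 0 < c1 \<and> c1 < c2 \<and>
        (\<forall>x>0. c1 < - x * U2 x / U1 x \<and> - x * U2 x / U1 x < c2))"

end

theory Submission
  imports Defs
begin

text \<open>Taylor's formula with Lagrange remainder writes \<open>U (x + h)\<close> as its second order
  expansion at \<open>x\<close> plus \<open>(U2 t - U2 x) h\<^sup>2 / 2\<close> with \<open>t\<close> between \<open>x\<close> and \<open>x + h\<close>.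
  For \<open>s\<close> in the admissible set, \<open>\<xi> + \<langle>s, \<eta>\<rangle> \<ge> (1 - K \<Sigma>\<^sub>i s\<^sub>i) \<xi>\<close>, and the bounds on the relative
  risk aversion make \<open>-U2\<close> comparable on \<open>[l x, \<infinity>)\<close> to \<open>-U2 x\<close>. Hence the remainder at
  \<open>(\<xi>, \<langle>s, \<eta>\<rangle>)\<close> is dominated by a multiple of \<open>-U2 \<xi> \<parallel>\<eta>\<parallel>\<^sup>2 \<parallel>s\<parallel>\<^sup>2\<close>, which gives all
  integrability claims, and dominated convergence applied to the remainder divided by
  \<open>\<parallel>s\<parallel>\<^sup>2\<close> gives the \<open>o(\<parallel>s\<parallel>\<^sup>2)\<close> error term.\<close>

lemma power2_inner_le: "(x \<bullet> y)\<^sup>2 \<le> (norm x)\<^sup>2 * (norm y)\<^sup>2"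
  for x y :: "'a::real_inner"
  using Cauchy_Schwarz_ineq[of x y] by (simp add: power2_norm_eq_inner)

lemma mono_on_pos_if_DERIV_nonneg:
  fixes f f' :: "real \<Rightarrow> real"
  assumes "\<And>y. y > 0 \<Longrightarrow> (f has_real_derivative f' y) (at y)" "\<And>y. y > 0 \<Longrightarrow> 0 \<le> f' y"
  shows "mono_on {0<..} f"
proof (rule mono_onI)
  fix a b :: real assume "a \<in> {0<..}" "a \<le> b"
  show "f a \<le> f b"
  proof (rule DERIV_nonneg_imp_nondecreasing[OF \<open>a \<le> b\<close>])
    fix y assume "a \<le> y" "y \<le> b"
    with \<open>a \<in> {0<..}\<close> have "y > 0" by simp
    with assms show "\<exists>d. (f has_real_derivative d) (at y) \<and> 0 \<le> d" by blast
  qed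
qed

locale A2_utility =
  fixes U U1 U2 :: "real \<Rightarrow> real" and c1 c2 :: real
  assumes A2: "utility_A2 U U1 U2"
    and c1_pos: "0 < c1"
    and risk_aversion_bounds: "\<And>x. x > 0 \<Longrightarrow> c1 < - x * U2 x / U1 x \<and> - x * U2 x / U1 x < c2"
begin

lemma U_deriv: "x > 0 \<Longrightarrow> (U has_real_derivative U1 x) (at x)"
  and U1_deriv: "x > 0 \<Longrightarrow> (U1 has_real_derivative U2 x) (at x)"
  using A2 unfolding utility_A2_def by auto

lemma continuous_on_U: "continuous_on {0<..} U"
  by (intro continuous_at_imp_continuous_on ballI DERIV_isCont[OF U_deriv]) auto

lemma continuous_on_U1: "continuous_on {0<..} U1"
  and continuous_on_U2: "continuous_on {0<..} U2"
  using A2 unfolding utility_A2_def by auto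

lemma U1_pos:
  assumes "x > 0" shows "U1 x > 0"
proof -
  \<comment> \<open>a vanishing denominator would make the risk aversion ratio \<open>0\<close>, violating \<open>c1 > 0\<close>\<close>
  have "U1 x \<noteq> 0"
    using risk_aversion_bounds[OF assms] c1_pos by auto
  moreover have "\<not> U1 x < 0"
  proof
    assume "U1 x < 0"
    then obtain d where "d > 0" and decreasing: "\<And>h. 0 < h \<Longrightarrow> h < d \<Longrightarrow> U (x + h) < U x"
      using DERIV_neg_dec_right[OF U_deriv[OF assms]] by blast
    then have "U (x + d / 2) < U x"
      by simp
    moreover have "U x < U (x + d / 2)"
      using A2 assms \<open>d > 0\<close> unfolding utility_A2_def strict_mono_on_def by auto
    ultimately show False
      by simp
  qed
  ultimately show ?thesis
    by linarith
qed

lemma U1_lt_U2: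
  assumes "x > 0" shows "c1 * U1 x < x * (- U2 x)"
  using pos_less_divide_eq[OF U1_pos[OF assms], of c1 "x * (- U2 x)"] risk_aversion_bounds[OF assms]
  by simp

lemma U2_lt_U1:
  assumes "x > 0" shows "x * (- U2 x) < c2 * U1 x"
  using pos_divide_less_eq[OF U1_pos[OF assms], of "x * (- U2 x)" c2] risk_aversion_bounds[OF assms]
  by simp

lemma U2_neg:
  assumes "x > 0" shows "U2 x < 0"
proof -
  have "0 < c1 * U1 x"
    using c1_pos U1_pos[OF assms] by simp
  then have "0 < x * (- U2 x)"
    using U1_lt_U2[OF assms] by linarith
  then show ?thesis
    using assms by (simp add: mult_less_0_iff)
qed

lemma c2_gt_c1: "c1 < c2"
  using risk_aversion_bounds[of 1] by linarith

lemma U1_antimono: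
  assumes "0 < x" "x \<le> z" shows "U1 z \<le> U1 x"
proof -
  have "mono_on {0<..} (\<lambda>y. - U1 y)"
  proof (rule mono_on_pos_if_DERIV_nonneg)
    fix y :: real assume "y > 0"
    show "((\<lambda>y. - U1 y) has_real_derivative - U2 y) (at y)"
      using U1_deriv[OF \<open>y > 0\<close>] by (rule DERIV_minus)
    show "0 \<le> - U2 y"
      using U2_neg[OF \<open>y > 0\<close>] by simp
  qed
  then show ?thesis
    using mono_onD[of "{0<..}" "\<lambda>y. - U1 y" x z] assms by simp
qed

lemma power_U1_mono: "mono_on {0<..} (\<lambda>y. y powr c2 * U1 y)"
proof (rule mono_on_pos_if_DERIV_nonneg)
  fix y :: real assume y: "y > 0"
  show "((\<lambda>y. y powr c2 * U1 y) has_real_derivative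
      c2 * y powr (c2 - 1) * U1 y + y powr c2 * U2 y) (at y)"
    using y U_deriv[OF y] U1_deriv[OF y]
    by (auto intro!: derivative_eq_intros has_real_derivative_powr)
  have "0 \<le> y powr (c2 - 1) * (c2 * U1 y + y * U2 y)"
    using U2_lt_U1[OF y] by simp
  also have "\<dots> = c2 * y powr (c2 - 1) * U1 y + (y * y powr (c2 - 1)) * U2 y"
    by (simp add: algebra_simps)
  also have "y * y powr (c2 - 1) = y powr c2"
    using y by (simp add: powr_mult_base)
  finally show "0 \<le> c2 * y powr (c2 - 1) * U1 y + y powr c2 * U2 y" .
qed

lemma U1_le_scaled:
  assumes "0 < l" "l \<le> 1" "0 < x" "l * x \<le> z"
  shows "U1 z \<le> (1 / l) powr c2 * U1 x"
proof (cases "z \<le> x")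
  case True
  have "z > 0"
    using assms mult_pos_pos[of l x] by linarith
  then have "z powr c2 * U1 z \<le> x powr c2 * U1 x"
    using mono_onD[OF power_U1_mono, of z x] True by simp
  then have "U1 z \<le> (x powr c2 / z powr c2) * U1 x"
    using \<open>z > 0\<close> by (simp add: field_simps)
  also have "x powr c2 / z powr c2 = (x / z) powr c2"
    by (simp add: powr_divide)
  also have "(x / z) powr c2 \<le> (1 / l) powr c2"
    using assms \<open>z > 0\<close> c1_pos c2_gt_c1 by (intro powr_mono2) (auto simp: field_simps)
  finally show ?thesis
    using U1_pos[OF assms(3)] by (simp add: mult_right_mono)
next
  case False
  then have "U1 z \<le> U1 x"
    using U1_antimono assms by simp
  also have "\<dots> \<le> (1 / l) powr c2 * U1 x"
    using assms c1_pos c2_gt_c1 U1_pos[OF assms(3)] ge_one_powr_ge_zero[of "1 / l" c2] by simp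
  finally show ?thesis .
qed

lemma U2_comparable:
  assumes "0 < l" "l \<le> 1"
  obtains C where "C > 0" "\<And>x z. 0 < x \<Longrightarrow> l * x \<le> z \<Longrightarrow> - U2 z \<le> C * (- U2 x)"
proof -
  define P where "P = (1 / l) powr c2"
  have "- U2 z \<le> c2 * P / (c1 * l) * (- U2 x)" if xz: "0 < x" "l * x \<le> z" for x z
  proof -
    have "z > 0"
      using assms xz mult_pos_pos[of l x] by linarith
    have "- U2 z < c2 * U1 z / z"
      using U2_lt_U1[OF \<open>z > 0\<close>] \<open>z > 0\<close> by (simp add: field_simps)
    also have "\<dots> \<le> c2 * (P * U1 x) / (l * x)"
      unfolding P_def using U1_le_scaled[OF assms xz] U1_pos[OF \<open>z > 0\<close>] c1_pos c2_gt_c1 xz assms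
      by (intro frac_le mult_left_mono) auto
    also have "\<dots> \<le> c2 * (P * (x * (- U2 x) / c1)) / (l * x)"
    proof -
      have "U1 x \<le> x * (- U2 x) / c1"
        using U1_lt_U2[OF xz(1)] c1_pos by (simp add: field_simps)
      then show ?thesis
        unfolding P_def using c1_pos c2_gt_c1 xz assms by (intro divide_right_mono mult_left_mono) auto
    qed
    also have "\<dots> = c2 * P / (c1 * l) * (- U2 x)"
      using xz c1_pos assms by (simp add: field_simps)
    finally show ?thesis
      by simp
  qed
  moreover have "0 < c2 * P / (c1 * l)"
    unfolding P_def using c1_pos c2_gt_c1 assms by simp
  ultimately show ?thesis
    using that by blast
qed

lemma U_minus_x_U1_mono: "mono_on {0<..} (\<lambda>y. U y - y * U1 y)"
proof (rule mono_on_pos_if_DERIV_nonneg)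
  fix y :: real assume y: "y > 0"
  show "((\<lambda>y. U y - y * U1 y) has_real_derivative y * (- U2 y)) (at y)"
    using U_deriv[OF y] U1_deriv[OF y] by (auto intro!: derivative_eq_intros)
  show "0 \<le> y * (- U2 y)"
    using mult_pos_neg[OF y U2_neg[OF y]] by simp
qed

lemma c2_U_plus_x_U1_mono: "mono_on {0<..} (\<lambda>y. c2 * U y + y * U1 y)"
proof (rule mono_on_pos_if_DERIV_nonneg)
  fix y :: real assume y: "y > 0"
  show "((\<lambda>y. c2 * U y + y * U1 y) has_real_derivative U1 y + (c2 * U1 y + y * U2 y)) (at y)"
    using U_deriv[OF y] U1_deriv[OF y] by (auto intro!: derivative_eq_intros)
  show "0 \<le> U1 y + (c2 * U1 y + y * U2 y)"
    using U1_pos[OF y] U2_lt_U1[OF y] by simp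
qed

lemma x_U1_le_abs_U:
  obtains C where "C > 0" "\<And>x. 0 < x \<Longrightarrow> x * U1 x \<le> C * (\<bar>U x\<bar> + 1)"
proof -
  define A where "A = \<bar>U 1\<bar> + \<bar>U1 1\<bar>"
  have "A \<ge> 0" "c2 > 0"
    using c1_pos c2_gt_c1 unfolding A_def by auto
  have "x * U1 x \<le> (1 + c2) * (1 + A) * (\<bar>U x\<bar> + 1)" if "0 < x" for x
  proof -
    have "x * U1 x \<le> (1 + c2) * (\<bar>U x\<bar> + A)"
    proof (cases "1 \<le> x")
      case True
      from mono_onD[OF U_minus_x_U1_mono, of 1 x] have "U 1 - U1 1 \<le> U x - x * U1 x"
        using True by simp
      then have "x * U1 x \<le> \<bar>U x\<bar> + A"
        unfolding A_def by linarith
      also have "\<dots> \<le> (1 + c2) * (\<bar>U x\<bar> + A)"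
        using mult_nonneg_nonneg[of c2 "\<bar>U x\<bar> + A"] \<open>A \<ge> 0\<close> \<open>c2 > 0\<close>
        by (simp add: distrib_right)
      finally show ?thesis .
    next
      case False
      from mono_onD[OF c2_U_plus_x_U1_mono, of x 1] have "c2 * U x + x * U1 x \<le> c2 * U 1 + U1 1"
        using False \<open>0 < x\<close> by simp
      moreover have "c2 * U 1 \<le> c2 * \<bar>U 1\<bar>" "c2 * (- U x) \<le> c2 * \<bar>U x\<bar>"
        using \<open>c2 > 0\<close> by (intro mult_left_mono; simp)+
      moreover have "0 \<le> c2 * \<bar>U1 1\<bar>"
        using \<open>c2 > 0\<close> by simp
      moreover have "(1 + c2) * (\<bar>U x\<bar> + A) = \<bar>U x\<bar> + A + c2 * \<bar>U x\<bar> + c2 * \<bar>U 1\<bar> + c2 * \<bar>U1 1\<bar>"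
        unfolding A_def by (simp add: algebra_simps)
      ultimately show ?thesis
        unfolding A_def using abs_ge_self[of "U1 1"] abs_ge_zero[of "U x"] abs_ge_zero[of "U 1"]
        by linarith
    qed
    also have "\<dots> \<le> (1 + c2) * ((1 + A) * (\<bar>U x\<bar> + 1))"
      using \<open>A \<ge> 0\<close> \<open>c2 > 0\<close> by (intro mult_left_mono) (auto simp: algebra_simps)
    finally show ?thesis
      by (simp add: mult.assoc)
  qed
  moreover have "(1 + c2) * (1 + A) > 0"
    using \<open>A \<ge> 0\<close> \<open>c2 > 0\<close> by simp
  ultimately show ?thesis
    using that by blast
qed

definition taylor_remainder :: "real \<Rightarrow> real \<Rightarrow> real" where
  "taylor_remainder x h = U (x + h) - U x - U1 x * h - 1/2 * (U2 x * h\<^sup>2)"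

lemma taylor_remainder_Lagrange:
  assumes "x > 0" "x + h > 0"
  obtains t where "min x (x + h) \<le> t" "t \<le> max x (x + h)"
    "taylor_remainder x h = (U2 t - U2 x) / 2 * h\<^sup>2"
proof (cases "h = 0")
  case True
  then show ?thesis
    using that[of x] by (simp add: taylor_remainder_def)
next
  case False
  define D where "D = (\<lambda>m::nat. if m = 0 then U else if m = 1 then U1 else U2)"
  have "DERIV (D m) t :> D (Suc m) t" if "m < 2" "min x (x + h) \<le> t" "t \<le> max x (x + h)" for m t
  proof -
    have "t > 0"
      using that assms by linarith
    with \<open>m < 2\<close> show ?thesis
      using U_deriv U1_deriv by (auto simp: D_def less_2_cases_iff)
  qed
  then obtain t where t: "if x + h < x then x + h < t \<and> t < x else x < t \<and> t < x + h"
    "U (x + h) = (\<Sum>m<2. D m x / fact m * (x + h - x) ^ m) + D 2 t / fact 2 * (x + h - x) ^ 2"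
    using Taylor[of 2 D U "min x (x + h)" "max x (x + h)" x "x + h"] False
    unfolding D_def by auto
  show ?thesis
  proof
    show "min x (x + h) \<le> t" "t \<le> max x (x + h)"
      using t(1) by (auto split: if_splits)
    show "taylor_remainder x h = (U2 t - U2 x) / 2 * h\<^sup>2"
      using t(2) by (simp add: taylor_remainder_def D_def numeral_2_eq_2 algebra_simps)
  qed
qed

lemma abs_taylor_remainder_le:
  assumes "0 < l" "l \<le> 1"
  obtains C where "C > 0"
    "\<And>x h. 0 < x \<Longrightarrow> l * x \<le> x + h \<Longrightarrow> \<bar>taylor_remainder x h\<bar> \<le> C * (- U2 x) * h\<^sup>2"
proof -
  obtain C where C: "C > 0" "\<And>x z. 0 < x \<Longrightarrow> l * x \<le> z \<Longrightarrow> - U2 z \<le> C * (- U2 x)"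
    using U2_comparable[OF assms] by blast
  show ?thesis
  proof
    show "(C + 1) / 2 > 0"
      using C(1) by simp
    fix x h assume x: "0 < x" and lx: "l * x \<le> x + h"
    have "l * x > 0"
      using x assms by simp
    then have "x + h > 0"
      using lx by linarith
    then obtain t where t: "min x (x + h) \<le> t" "t \<le> max x (x + h)"
      "taylor_remainder x h = (U2 t - U2 x) / 2 * h\<^sup>2"
      using taylor_remainder_Lagrange[OF x] by blast
    have "l * x \<le> x"
      using assms x mult_right_mono[of l 1 x] by simp
    then have "l * x \<le> t"
      using t(1) lx by linarith
    then have "- U2 t \<le> C * (- U2 x)"
      using C(2) x by blast
    moreover have "t > 0"
      using \<open>l * x \<le> t\<close> \<open>l * x > 0\<close> by linarith
    ultimately have "\<bar>U2 t - U2 x\<bar> \<le> (C + 1) * (- U2 x)"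
      using U2_neg[OF \<open>t > 0\<close>] U2_neg[OF x] by (simp add: abs_if algebra_simps)
    then have "\<bar>U2 t - U2 x\<bar> / 2 * h\<^sup>2 \<le> (C + 1) * (- U2 x) / 2 * h\<^sup>2"
      by (intro mult_right_mono divide_right_mono) auto
    moreover have "\<bar>taylor_remainder x h\<bar> = \<bar>U2 t - U2 x\<bar> / 2 * h\<^sup>2"
      unfolding t(3) by (simp add: abs_mult)
    ultimately show "\<bar>taylor_remainder x h\<bar> \<le> (C + 1) / 2 * (- U2 x) * h\<^sup>2"
      by simp
  qed
qed

lemma taylor_remainder_smallo:
  assumes "x > 0"
  shows "taylor_remainder x \<in> o[nhds 0](\<lambda>h. h\<^sup>2)"
proof (rule landau_o.smallI)
  fix c :: real assume "c > 0"
  have "isCont U2 x"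
    using continuous_on_U2 assms by (simp add: continuous_on_eq_continuous_at)
  moreover have "2 * c > 0"
    using \<open>c > 0\<close> by simp
  ultimately obtain d where "d > 0" and d: "\<And>y. dist y x < d \<Longrightarrow> dist (U2 y) (U2 x) < 2 * c"
    unfolding continuous_at_eps_delta by blast
  have "\<forall>\<^sub>F h in nhds 0. \<bar>h\<bar> < min d x"
    unfolding eventually_nhds_metric dist_real_def
    by (rule exI[of _ "min d x"]) (use \<open>d > 0\<close> assms in simp)
  then show "\<forall>\<^sub>F h in nhds 0. norm (taylor_remainder x h) \<le> c * norm (h\<^sup>2)"
  proof eventually_elim
    case (elim h)
    then have "\<bar>h\<bar> < d" "x + h > 0"
      by (simp_all add: abs_less_iff)
    then obtain t where t: "min x (x + h) \<le> t" "t \<le> max x (x + h)"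
      "taylor_remainder x h = (U2 t - U2 x) / 2 * h\<^sup>2"
      using taylor_remainder_Lagrange[OF assms] by blast
    have "\<bar>t - x\<bar> \<le> \<bar>h\<bar>"
      using t(1,2) unfolding min_def max_def by (auto split: if_splits)
    then have "\<bar>U2 t - U2 x\<bar> < 2 * c"
      using d[of t] \<open>\<bar>h\<bar> < d\<close> by (simp add: dist_real_def)
    then have "\<bar>U2 t - U2 x\<bar> / 2 * h\<^sup>2 \<le> c * h\<^sup>2"
      by (intro mult_right_mono) auto
    moreover have "\<bar>taylor_remainder x h\<bar> = \<bar>U2 t - U2 x\<bar> / 2 * h\<^sup>2"
      unfolding t(3) by (simp add: abs_mult)
    ultimately show ?case
      by simp
  qed
qed

lemma taylor_remainder_inner_smallo:
  fixes e :: "'b::real_inner" and T :: "'b set"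
  assumes "x > 0"
  shows "(\<lambda>s. taylor_remainder x (s \<bullet> e)) \<in> o[at 0 within T](\<lambda>s. (norm s)\<^sup>2)"
proof -
  have "((\<lambda>s. s \<bullet> e) \<longlongrightarrow> 0) (at 0 within T)"
    by (auto intro!: tendsto_eq_intros)
  then have "(\<lambda>s. taylor_remainder x (s \<bullet> e)) \<in> o[at 0 within T](\<lambda>s. (s \<bullet> e)\<^sup>2)"
    by (rule landau_o.small.compose[OF taylor_remainder_smallo[OF assms]])
  also have "(\<lambda>s. (s \<bullet> e)\<^sup>2) \<in> O[at 0 within T](\<lambda>s. (norm s)\<^sup>2)"
  proof (rule landau_o.bigI[of "(norm e)\<^sup>2 + 1"])
    have "(s \<bullet> e)\<^sup>2 \<le> (norm e)\<^sup>2 * (norm s)\<^sup>2" for s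
      using power2_inner_le[of s e] by (simp add: mult.commute)
    also have "(norm e)\<^sup>2 * (norm s)\<^sup>2 \<le> ((norm e)\<^sup>2 + 1) * (norm s)\<^sup>2" for s
      by (simp add: mult_right_mono)
    finally show "\<forall>\<^sub>F s in at 0 within T. norm ((s \<bullet> e)\<^sup>2) \<le> ((norm e)\<^sup>2 + 1) * norm ((norm s)\<^sup>2)"
      by simp
  qed (intro add_nonneg_pos; simp)
  finally show ?thesis .
qed

end

lemma integral_dominated_convergence_at_within:
  fixes f :: "'c::first_countable_topology \<Rightarrow> 'a \<Rightarrow> 'b::{banach, second_countable_topology}"
  assumes "g \<in> borel_measurable M" "integrable M w"
    and "\<forall>\<^sub>F t in at x within T. f t \<in> borel_measurable M"
    and "\<forall>\<^sub>F t in at x within T. AE \<omega> in M. norm (f t \<omega>) \<le> w \<omega>"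
    and "AE \<omega> in M. ((\<lambda>t. f t \<omega>) \<longlongrightarrow> g \<omega>) (at x within T)"
  shows "((\<lambda>t. integral\<^sup>L M (f t)) \<longlongrightarrow> integral\<^sup>L M g) (at x within T)"
  unfolding tendsto_at_iff_sequentially
proof (intro allI impI)
  fix X assume "\<forall>i. X i \<in> T - {x}" "X \<longlonglongrightarrow> x"
  then have X: "filterlim X (at x within T) sequentially"
    by (simp add: filterlim_at)
  obtain N where N: "\<And>n. N \<le> n \<Longrightarrow> f (X n) \<in> borel_measurable M \<and> (AE \<omega> in M. norm (f (X n) \<omega>) \<le> w \<omega>)"
    using filterlim_iff[THEN iffD1, OF X, rule_format, OF eventually_conj[OF assms(3,4)]]
    by (auto simp: eventually_sequentially)
  have "(\<lambda>n. integral\<^sup>L M (f (X (n + N)))) \<longlonglongrightarrow> integral\<^sup>L M g"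
  proof (rule integral_dominated_convergence[OF assms(1) _ assms(2)])
    show "AE \<omega> in M. (\<lambda>n. f (X (n + N)) \<omega>) \<longlonglongrightarrow> g \<omega>"
      using assms(5)
    proof eventually_elim
      case (elim \<omega>)
      then show ?case
        by (intro LIMSEQ_ignore_initial_segment filterlim_compose[OF _ X])
    qed
  qed (use N in auto)
  then show "((\<lambda>t. integral\<^sup>L M (f t)) \<circ> X) \<longlonglongrightarrow> integral\<^sup>L M g"
    unfolding comp_def by (rule LIMSEQ_offset)
qed

lemma borel_measurable_continuous_on_pos_comp:
  fixes g :: "real \<Rightarrow> real"
  assumes "continuous_on {0<..} g" "f \<in> borel_measurable M" "\<And>\<omega>. \<omega> \<in> space M \<Longrightarrow> f \<omega> > 0"
  shows "(\<lambda>\<omega>. g (f \<omega>)) \<in> borel_measurable M"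
proof -
  have "(\<lambda>x. if x \<in> {0<..} then g x else 0) \<in> borel_measurable borel"
    by (rule borel_measurable_continuous_on_if) (use assms(1) in auto)
  from measurable_comp[OF assms(2) this]
  have "(\<lambda>\<omega>. if f \<omega> \<in> {0<..} then g (f \<omega>) else 0) \<in> borel_measurable M"
    by (simp add: comp_def)
  then show ?thesis
    by (rule measurable_cong[THEN iffD1, rotated]) (use assms(3) in auto)
qed

locale A2_perturbation = prob_space M + A2_utility U U1 U2 c1 c2
  for M :: "'a measure" and U U1 U2 :: "real \<Rightarrow> real" and c1 c2 :: real +
  fixes \<xi> :: "'a \<Rightarrow> real" and \<eta> :: "'a \<Rightarrow> 'b::euclidean_space"
  assumes xi_measurable[measurable]: "\<xi> \<in> borel_measurable M"
    and xi_pos: "\<And>\<omega>. \<omega> \<in> space M \<Longrightarrow> \<xi> \<omega> > 0"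
    and integrable_U_xi: "integrable M (\<lambda>\<omega>. U (\<xi> \<omega>))"
    and eta_measurable[measurable]: "\<eta> \<in> borel_measurable M"
    and integrable_U2_norm_eta: "integrable M (\<lambda>\<omega>. - U2 (\<xi> \<omega>) * (norm (\<eta> \<omega>))\<^sup>2)"
begin

lemma borel_measurable_U_comp:
  assumes "f \<in> borel_measurable M" "\<And>\<omega>. \<omega> \<in> space M \<Longrightarrow> f \<omega> > 0"
  shows "(\<lambda>\<omega>. U (f \<omega>)) \<in> borel_measurable M"
    and "(\<lambda>\<omega>. U1 (f \<omega>)) \<in> borel_measurable M"
    and "(\<lambda>\<omega>. U2 (f \<omega>)) \<in> borel_measurable M"
  using assms continuous_on_U continuous_on_U1 continuous_on_U2
  by (auto intro: borel_measurable_continuous_on_pos_comp)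

lemmas borel_measurable_U_xi[measurable] = borel_measurable_U_comp[OF xi_measurable xi_pos]

lemma integrable_xi_U1: "integrable M (\<lambda>\<omega>. \<xi> \<omega> * U1 (\<xi> \<omega>))"
proof -
  obtain C where C: "\<And>x. 0 < x \<Longrightarrow> x * U1 x \<le> C * (\<bar>U x\<bar> + 1)"
    using x_U1_le_abs_U by blast
  show ?thesis
  proof (rule Bochner_Integration.integrable_bound)
    show "integrable M (\<lambda>\<omega>. C * (\<bar>U (\<xi> \<omega>)\<bar> + 1))"
      using integrable_U_xi by auto
    show "AE \<omega> in M. norm (\<xi> \<omega> * U1 (\<xi> \<omega>)) \<le> norm (C * (\<bar>U (\<xi> \<omega>)\<bar> + 1))"
    proof (rule AE_I2)
      fix \<omega> assume "\<omega> \<in> space M"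
      then have x: "\<xi> \<omega> > 0"
        by (rule xi_pos)
      then have "norm (\<xi> \<omega> * U1 (\<xi> \<omega>)) = \<xi> \<omega> * U1 (\<xi> \<omega>)"
        using U1_pos[OF x] by simp
      also have "\<dots> \<le> C * (\<bar>U (\<xi> \<omega>)\<bar> + 1)"
        by (rule C[OF x])
      also have "\<dots> \<le> norm (C * (\<bar>U (\<xi> \<omega>)\<bar> + 1))"
        by simp
      finally show "norm (\<xi> \<omega> * U1 (\<xi> \<omega>)) \<le> norm (C * (\<bar>U (\<xi> \<omega>)\<bar> + 1))" .
    qed
  qed measurable
qed

lemma integrable_U1_norm_eta: "integrable M (\<lambda>\<omega>. U1 (\<xi> \<omega>) * norm (\<eta> \<omega>))"
proof (rule Bochner_Integration.integrable_bound)
  show "integrable M (\<lambda>\<omega>. \<xi> \<omega> * U1 (\<xi> \<omega>) + 1 / c1 * (- U2 (\<xi> \<omega>) * (norm (\<eta> \<omega>))\<^sup>2))"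
    using integrable_xi_U1 integrable_U2_norm_eta by auto
  show "AE \<omega> in M. norm (U1 (\<xi> \<omega>) * norm (\<eta> \<omega>))
      \<le> norm (\<xi> \<omega> * U1 (\<xi> \<omega>) + 1 / c1 * (- U2 (\<xi> \<omega>) * (norm (\<eta> \<omega>))\<^sup>2))"
  proof (rule AE_I2)
    fix \<omega> assume "\<omega> \<in> space M"
    define x b where "x = \<xi> \<omega>" and "b = norm (\<eta> \<omega>)"
    have "x > 0" "b \<ge> 0"
      using xi_pos[OF \<open>\<omega> \<in> space M\<close>] unfolding x_def b_def by auto
    have "b \<le> x + b\<^sup>2 / x"
      using \<open>x > 0\<close> sum_squares_bound[of x b] mult_nonneg_nonneg[OF \<open>b \<ge> 0\<close> less_imp_le[OF \<open>x > 0\<close>]]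
      by (simp add: field_simps power2_eq_square)
    then have "U1 x * b \<le> U1 x * (x + b\<^sup>2 / x)"
      using U1_pos[OF \<open>x > 0\<close>] by (simp add: mult_left_mono)
    also have "\<dots> = x * U1 x + U1 x / x * b\<^sup>2"
      using \<open>x > 0\<close> by (simp add: field_simps)
    also have "\<dots> \<le> x * U1 x + 1 / c1 * (- U2 x * b\<^sup>2)"
    proof -
      have "U1 x / x \<le> - U2 x / c1"
        using U1_lt_U2[OF \<open>x > 0\<close>] \<open>x > 0\<close> c1_pos by (simp add: field_simps)
      from mult_right_mono[OF this zero_le_power2[of b]] show ?thesis
        by simp
    qed
    finally show "norm (U1 (\<xi> \<omega>) * norm (\<eta> \<omega>))
        \<le> norm (\<xi> \<omega> * U1 (\<xi> \<omega>) + 1 / c1 * (- U2 (\<xi> \<omega>) * (norm (\<eta> \<omega>))\<^sup>2))"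
      using U1_pos[OF \<open>x > 0\<close>] \<open>b \<ge> 0\<close> unfolding x_def b_def by simp
  qed
qed measurable

lemma integrable_U1_inner: "integrable M (\<lambda>\<omega>. U1 (\<xi> \<omega>) * (\<eta> \<omega> \<bullet> s))"
proof (rule Bochner_Integration.integrable_bound)
  show "integrable M (\<lambda>\<omega>. norm s * (U1 (\<xi> \<omega>) * norm (\<eta> \<omega>)))"
    using integrable_U1_norm_eta by auto
  show "AE \<omega> in M. norm (U1 (\<xi> \<omega>) * (\<eta> \<omega> \<bullet> s)) \<le> norm (norm s * (U1 (\<xi> \<omega>) * norm (\<eta> \<omega>)))"
  proof (rule AE_I2)
    fix \<omega> assume "\<omega> \<in> space M"
    then have "U1 (\<xi> \<omega>) > 0"
      using U1_pos xi_pos by blast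
    then show "norm (U1 (\<xi> \<omega>) * (\<eta> \<omega> \<bullet> s)) \<le> norm (norm s * (U1 (\<xi> \<omega>) * norm (\<eta> \<omega>)))"
      using Cauchy_Schwarz_ineq2[of "\<eta> \<omega>" s] by (simp add: abs_mult mult_left_mono mult_ac)
  qed
qed measurable

lemma integrable_U2_inner_sq: "integrable M (\<lambda>\<omega>. U2 (\<xi> \<omega>) * (\<eta> \<omega> \<bullet> s)\<^sup>2)"
proof (rule Bochner_Integration.integrable_bound)
  show "integrable M (\<lambda>\<omega>. (norm s)\<^sup>2 * (- U2 (\<xi> \<omega>) * (norm (\<eta> \<omega>))\<^sup>2))"
    using integrable_U2_norm_eta by auto
  show "AE \<omega> in M. norm (U2 (\<xi> \<omega>) * (\<eta> \<omega> \<bullet> s)\<^sup>2) \<le> norm ((norm s)\<^sup>2 * (- U2 (\<xi> \<omega>) * (norm (\<eta> \<omega>))\<^sup>2))"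
  proof (rule AE_I2)
    fix \<omega> assume "\<omega> \<in> space M"
    then have "- U2 (\<xi> \<omega>) > 0"
      using U2_neg xi_pos by (simp add: neg_less_0_iff_less)
    then show "norm (U2 (\<xi> \<omega>) * (\<eta> \<omega> \<bullet> s)\<^sup>2) \<le> norm ((norm s)\<^sup>2 * (- U2 (\<xi> \<omega>) * (norm (\<eta> \<omega>))\<^sup>2))"
      using power2_inner_le[of "\<eta> \<omega>" s] by (simp add: abs_mult mult_left_mono mult_ac)
  qed
qed measurable

lemma abs_taylor_remainder_shift_le:
  assumes "0 < l" "l \<le> 1"
  obtains C where "\<And>s \<omega>. \<omega> \<in> space M \<Longrightarrow> l * \<xi> \<omega> \<le> \<xi> \<omega> + s \<bullet> \<eta> \<omega> \<Longrightarrow>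
    \<bar>taylor_remainder (\<xi> \<omega>) (s \<bullet> \<eta> \<omega>)\<bar> \<le> C * (norm s)\<^sup>2 * (- U2 (\<xi> \<omega>) * (norm (\<eta> \<omega>))\<^sup>2)"
proof -
  obtain C where C: "C > 0"
    "\<And>x h. 0 < x \<Longrightarrow> l * x \<le> x + h \<Longrightarrow> \<bar>taylor_remainder x h\<bar> \<le> C * (- U2 x) * h\<^sup>2"
    using abs_taylor_remainder_le[OF assms] by blast
  have "\<bar>taylor_remainder (\<xi> \<omega>) (s \<bullet> \<eta> \<omega>)\<bar> \<le> C * (norm s)\<^sup>2 * (- U2 (\<xi> \<omega>) * (norm (\<eta> \<omega>))\<^sup>2)"
    if "\<omega> \<in> space M" "l * \<xi> \<omega> \<le> \<xi> \<omega> + s \<bullet> \<eta> \<omega>" for s \<omega>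
  proof -
    have x: "\<xi> \<omega> > 0"
      using that(1) by (rule xi_pos)
    have "\<bar>taylor_remainder (\<xi> \<omega>) (s \<bullet> \<eta> \<omega>)\<bar> \<le> C * (- U2 (\<xi> \<omega>)) * (s \<bullet> \<eta> \<omega>)\<^sup>2"
      using C(2)[OF x that(2)] .
    also have "\<dots> \<le> C * (- U2 (\<xi> \<omega>)) * ((norm s)\<^sup>2 * (norm (\<eta> \<omega>))\<^sup>2)"
      using mult_pos_neg[OF C(1) U2_neg[OF x]] power2_inner_le[of s "\<eta> \<omega>"]
      by (intro mult_left_mono) auto
    finally show ?thesis
      by (simp add: mult_ac)
  qed
  then show ?thesis
    using that by blast
qed

lemma integrable_taylor_remainder:
  assumes "0 < l" "l \<le> 1" "\<And>\<omega>. \<omega> \<in> space M \<Longrightarrow> l * \<xi> \<omega> \<le> \<xi> \<omega> + s \<bullet> \<eta> \<omega>"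
  shows "integrable M (\<lambda>\<omega>. taylor_remainder (\<xi> \<omega>) (s \<bullet> \<eta> \<omega>))"
proof -
  obtain C where C: "\<And>\<omega>. \<omega> \<in> space M \<Longrightarrow>
      \<bar>taylor_remainder (\<xi> \<omega>) (s \<bullet> \<eta> \<omega>)\<bar> \<le> C * (norm s)\<^sup>2 * (- U2 (\<xi> \<omega>) * (norm (\<eta> \<omega>))\<^sup>2)"
    using abs_taylor_remainder_shift_le[OF assms(1,2)] assms(3) by metis
  have "(\<lambda>\<omega>. U (\<xi> \<omega> + s \<bullet> \<eta> \<omega>)) \<in> borel_measurable M"
  proof (rule borel_measurable_U_comp)
    fix \<omega> assume "\<omega> \<in> space M"
    then have "0 < l * \<xi> \<omega>"
      using assms(1) xi_pos by simp
    then show "\<xi> \<omega> + s \<bullet> \<eta> \<omega> > 0"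
      using assms(3)[OF \<open>\<omega> \<in> space M\<close>] by linarith
  qed measurable
  then have "(\<lambda>\<omega>. taylor_remainder (\<xi> \<omega>) (s \<bullet> \<eta> \<omega>)) \<in> borel_measurable M"
    unfolding taylor_remainder_def by measurable
  then show ?thesis
  proof (rule Bochner_Integration.integrable_bound[rotated])
    show "integrable M (\<lambda>\<omega>. C * (norm s)\<^sup>2 * (- U2 (\<xi> \<omega>) * (norm (\<eta> \<omega>))\<^sup>2))"
      using integrable_U2_norm_eta by auto
    show "AE \<omega> in M. norm (taylor_remainder (\<xi> \<omega>) (s \<bullet> \<eta> \<omega>))
        \<le> norm (C * (norm s)\<^sup>2 * (- U2 (\<xi> \<omega>) * (norm (\<eta> \<omega>))\<^sup>2))"
    proof (rule AE_I2)
      fix \<omega> assume "\<omega> \<in> space M"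
      then show "norm (taylor_remainder (\<xi> \<omega>) (s \<bullet> \<eta> \<omega>))
          \<le> norm (C * (norm s)\<^sup>2 * (- U2 (\<xi> \<omega>) * (norm (\<eta> \<omega>))\<^sup>2))"
        using C abs_ge_self[of "C * (norm s)\<^sup>2 * (- U2 (\<xi> \<omega>) * (norm (\<eta> \<omega>))\<^sup>2)"]
        unfolding real_norm_def by fastforce
    qed
  qed
qed

lemma U_shift_decomposition:
  "U (\<xi> \<omega> + s \<bullet> \<eta> \<omega>) = taylor_remainder (\<xi> \<omega>) (s \<bullet> \<eta> \<omega>)
    + U (\<xi> \<omega>) + U1 (\<xi> \<omega>) * (\<eta> \<omega> \<bullet> s) + 1/2 * (U2 (\<xi> \<omega>) * (\<eta> \<omega> \<bullet> s)\<^sup>2)"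
  by (simp add: taylor_remainder_def inner_commute)

lemma integrable_U_shift:
  assumes "0 < l" "l \<le> 1" "\<And>\<omega>. \<omega> \<in> space M \<Longrightarrow> l * \<xi> \<omega> \<le> \<xi> \<omega> + s \<bullet> \<eta> \<omega>"
  shows "integrable M (\<lambda>\<omega>. U (\<xi> \<omega> + s \<bullet> \<eta> \<omega>))"
  unfolding U_shift_decomposition
  using integrable_taylor_remainder[OF assms] integrable_U_xi integrable_U1_inner integrable_U2_inner_sq
  by simp

lemma integral_U_shift:
  assumes "0 < l" "l \<le> 1" "\<And>\<omega>. \<omega> \<in> space M \<Longrightarrow> l * \<xi> \<omega> \<le> \<xi> \<omega> + s \<bullet> \<eta> \<omega>"
  shows "(\<integral>\<omega>. U (\<xi> \<omega> + s \<bullet> \<eta> \<omega>) \<partial>M) = (\<integral>\<omega>. taylor_remainder (\<xi> \<omega>) (s \<bullet> \<eta> \<omega>) \<partial>M)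
      + (\<integral>\<omega>. U (\<xi> \<omega>) \<partial>M) + (\<integral>\<omega>. U1 (\<xi> \<omega>) * (\<eta> \<omega> \<bullet> s) \<partial>M)
      + 1/2 * (\<integral>\<omega>. U2 (\<xi> \<omega>) * (\<eta> \<omega> \<bullet> s)\<^sup>2 \<partial>M)"
  unfolding U_shift_decomposition
  using integrable_taylor_remainder[OF assms] integrable_U_xi integrable_U1_inner[of s]
    integrable_U2_inner_sq[of s]
  by (simp add: Bochner_Integration.integral_add Bochner_Integration.integrable_add)

lemma second_order_expansion:
  fixes T :: "'b set"
  assumes "\<forall>\<^sub>F s in at 0 within T. \<forall>\<omega>\<in>space M. \<xi> \<omega> / 2 \<le> \<xi> \<omega> + s \<bullet> \<eta> \<omega>"
  shows "(\<lambda>s. (\<integral>\<omega>. U (\<xi> \<omega> + s \<bullet> \<eta> \<omega>) \<partial>M) - (\<integral>\<omega>. U (\<xi> \<omega>) \<partial>M)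
      - (\<integral>\<omega>. U1 (\<xi> \<omega>) * (\<eta> \<omega> \<bullet> s) \<partial>M) - 1/2 * (\<integral>\<omega>. U2 (\<xi> \<omega>) * (\<eta> \<omega> \<bullet> s)\<^sup>2 \<partial>M))
    \<in> o[at 0 within T](\<lambda>s. (norm s)\<^sup>2)" (is "?F \<in> _")
proof -
  obtain C where C: "\<And>s \<omega>. \<omega> \<in> space M \<Longrightarrow> 1/2 * \<xi> \<omega> \<le> \<xi> \<omega> + s \<bullet> \<eta> \<omega> \<Longrightarrow>
      \<bar>taylor_remainder (\<xi> \<omega>) (s \<bullet> \<eta> \<omega>)\<bar> \<le> C * (norm s)\<^sup>2 * (- U2 (\<xi> \<omega>) * (norm (\<eta> \<omega>))\<^sup>2)"
  proof (rule abs_taylor_remainder_shift_le[of "1/2"])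
    fix C assume bound: "\<And>s \<omega>. \<omega> \<in> space M \<Longrightarrow> 1/2 * \<xi> \<omega> \<le> \<xi> \<omega> + s \<bullet> \<eta> \<omega> \<Longrightarrow>
      \<bar>taylor_remainder (\<xi> \<omega>) (s \<bullet> \<eta> \<omega>)\<bar> \<le> C * (norm s)\<^sup>2 * (- U2 (\<xi> \<omega>) * (norm (\<eta> \<omega>))\<^sup>2)"
    from bound show thesis
      by (rule that)
  qed simp_all
  define R where "R s \<omega> = taylor_remainder (\<xi> \<omega>) (s \<bullet> \<eta> \<omega>)" for s \<omega>
  have near_0: "\<forall>\<^sub>F s in at 0 within T. s \<noteq> 0 \<and> (\<forall>\<omega>\<in>space M. 1/2 * \<xi> \<omega> \<le> \<xi> \<omega> + s \<bullet> \<eta> \<omega>)"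
    using assms by (simp add: eventually_at_filter)
  have "((\<lambda>s. integral\<^sup>L M (\<lambda>\<omega>. R s \<omega> / (norm s)\<^sup>2)) \<longlongrightarrow> integral\<^sup>L M (\<lambda>\<omega>. 0)) (at 0 within T)"
  proof (rule integral_dominated_convergence_at_within)
    show "integrable M (\<lambda>\<omega>. C * (- U2 (\<xi> \<omega>) * (norm (\<eta> \<omega>))\<^sup>2))"
      using integrable_U2_norm_eta by auto
    show "\<forall>\<^sub>F s in at 0 within T. (\<lambda>\<omega>. R s \<omega> / (norm s)\<^sup>2) \<in> borel_measurable M"
      using near_0
    proof eventually_elim
      case (elim s)
      then have "integrable M (R s)"
        unfolding R_def by (intro integrable_taylor_remainder[of "1/2"]) auto
      then show ?case
        by measurable
    qed
    show "\<forall>\<^sub>F s in at 0 within T. AE \<omega> in M. norm (R s \<omega> / (norm s)\<^sup>2) \<le> C * (- U2 (\<xi> \<omega>) * (norm (\<eta> \<omega>))\<^sup>2)"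
      using near_0
    proof eventually_elim
      case (elim s)
      show ?case
      proof (rule AE_I2)
        fix \<omega> assume "\<omega> \<in> space M"
        then have "\<bar>R s \<omega>\<bar> \<le> C * (- U2 (\<xi> \<omega>) * (norm (\<eta> \<omega>))\<^sup>2) * (norm s)\<^sup>2"
          unfolding R_def using C elim by (simp add: mult_ac)
        then show "norm (R s \<omega> / (norm s)\<^sup>2) \<le> C * (- U2 (\<xi> \<omega>) * (norm (\<eta> \<omega>))\<^sup>2)"
          using elim by (simp add: abs_divide divide_le_eq)
      qed
    qed
    show "AE \<omega> in M. ((\<lambda>s. R s \<omega> / (norm s)\<^sup>2) \<longlongrightarrow> 0) (at 0 within T)"
      unfolding R_def by (intro AE_I2 smalloD_tendsto taylor_remainder_inner_smallo xi_pos)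
  qed simp
  then have "((\<lambda>s. integral\<^sup>L M (R s) / (norm s)\<^sup>2) \<longlongrightarrow> 0) (at 0 within T)"
    by simp
  moreover have "\<forall>\<^sub>F s in at 0 within T. integral\<^sup>L M (R s) / (norm s)\<^sup>2 = ?F s / (norm s)\<^sup>2"
    using near_0
  proof eventually_elim
    case (elim s)
    then show ?case
      unfolding R_def by (simp add: integral_U_shift[of "1/2"])
  qed
  ultimately have "((\<lambda>s. ?F s / (norm s)\<^sup>2) \<longlongrightarrow> 0) (at 0 within T)"
    by (rule tendsto_cong[THEN iffD1, rotated])
  moreover have "\<forall>\<^sub>F s in at 0 within T. (norm s)\<^sup>2 \<noteq> 0"
    using near_0 by eventually_elim simp
  ultimately show ?thesis
    by (rule smalloI_tendsto)
qed

end

lemma shift_ge_scaled: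
  fixes s e :: "real ^ 'n"
  assumes "\<And>i. 0 \<le> s $ i" "\<And>i. - K * x \<le> e $ i"
  shows "(1 - K * (\<Sum>i\<in>UNIV. s $ i)) * x \<le> x + s \<bullet> e"
proof -
  have "- K * x * (\<Sum>i\<in>UNIV. s $ i) = (\<Sum>i\<in>UNIV. s $ i * (- K * x))"
    by (simp add: sum_distrib_left mult.commute)
  also have "\<dots> \<le> (\<Sum>i\<in>UNIV. s $ i * e $ i)"
    using assms by (intro sum_mono mult_left_mono) auto
  finally show ?thesis
    by (simp add: inner_vec_def algebra_simps)
qed

lemma half_le_shift:
  fixes s e :: "real ^ 'n"
  assumes "\<And>i. 0 \<le> s $ i" "\<And>i. - K * x \<le> e $ i" "K * (\<Sum>i\<in>UNIV. s $ i) < 1/2" "0 < x"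
  shows "x / 2 \<le> x + s \<bullet> e"
proof -
  have "1/2 * x \<le> (1 - K * (\<Sum>i\<in>UNIV. s $ i)) * x"
    using assms(3,4) by (intro mult_right_mono) auto
  then show ?thesis
    using shift_ge_scaled[of s K x e] assms(1,2) by simp
qed

lemma scaled_sum_components_bounds:
  fixes s :: "real ^ 'n"
  assumes "\<And>i. 0 \<le> s $ i \<and> s $ i < 1 / (K * real CARD('n))" "K > 0"
  shows "0 \<le> K * (\<Sum>i\<in>UNIV. s $ i)" "K * (\<Sum>i\<in>UNIV. s $ i) < 1"
proof -
  have "(\<Sum>i\<in>UNIV. s $ i) < (\<Sum>i\<in>(UNIV :: 'n set). 1 / (K * real CARD('n)))"
    using assms(1) by (intro sum_strict_mono) auto
  then show "K * (\<Sum>i\<in>UNIV. s $ i) < 1"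
    using assms(2) by (simp add: field_simps)
  show "0 \<le> K * (\<Sum>i\<in>UNIV. s $ i)"
    using assms by (intro mult_nonneg_nonneg sum_nonneg) (auto intro: less_imp_le)
qed

theorem lemma1:
  fixes M :: "'a measure" and U U1 U2 :: "real \<Rightarrow> real"
    and \<xi> :: "'a \<Rightarrow> real" and \<eta> :: "'a \<Rightarrow> real ^ 'n" and K :: real
  assumes "prob_space M"
    and "utility_A2 U U1 U2"
    and "\<xi> \<in> borel_measurable M" and "\<forall>\<omega>\<in>space M. \<xi> \<omega> > 0"
    and "integrable M (\<lambda>\<omega>. U (\<xi> \<omega>))"
    and "\<eta> \<in> borel_measurable M"
    and "K > 0"
    and "\<forall>\<omega>\<in>space M. \<forall>i. \<eta> \<omega> $ i \<ge> - K * \<xi> \<omega>"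
    and "integrable M (\<lambda>\<omega>. - U2 (\<xi> \<omega>) * (norm (\<eta> \<omega>))\<^sup>2)"
  defines "S \<equiv> {s :: real ^ 'n. \<forall>i. 0 \<le> s $ i \<and> s $ i < 1 / (K * real CARD('n))}"
    and "w \<equiv> (\<lambda>s. integral\<^sup>L M (\<lambda>\<omega>. U (\<xi> \<omega> + s \<bullet> \<eta> \<omega>)))"
  shows "(\<forall>s\<in>S. integrable M (\<lambda>\<omega>. U (\<xi> \<omega> + s \<bullet> \<eta> \<omega>))
                 \<and> integrable M (\<lambda>\<omega>. U1 (\<xi> \<omega>) * (\<eta> \<omega> \<bullet> s))
                 \<and> integrable M (\<lambda>\<omega>. U2 (\<xi> \<omega>) * (\<eta> \<omega> \<bullet> s)\<^sup>2))
                 \<and> ((\<lambda>s. w s - w 0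
              - integral\<^sup>L M (\<lambda>\<omega>. U1 (\<xi> \<omega>) * (\<eta> \<omega> \<bullet> s))
              - 1/2 * integral\<^sup>L M (\<lambda>\<omega>. U2 (\<xi> \<omega>) * (\<eta> \<omega> \<bullet> s)\<^sup>2))
           \<in> o[at 0 within S](\<lambda>s. (norm s)\<^sup>2))"
proof -
  obtain c1 c2 where "0 < c1" "\<And>x. x > 0 \<Longrightarrow> c1 < - x * U2 x / U1 x \<and> - x * U2 x / U1 x < c2"
    using assms(2) unfolding utility_A2_def by blast
  with assms(2) have "A2_utility U U1 U2 c1 c2"
    by (intro A2_utility.intro)
  then interpret A2_perturbation M U U1 U2 c1 c2 \<xi> \<eta>
    using assms(1,3-6,9) by (intro A2_perturbation.intro A2_perturbation_axioms.intro) auto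
  have S_bounds: "\<And>i. 0 \<le> s $ i" "0 \<le> K * (\<Sum>i\<in>UNIV. s $ i)" "K * (\<Sum>i\<in>UNIV. s $ i) < 1"
    if "s \<in> S" for s
    using that scaled_sum_components_bounds[of s K] assms(7) unfolding S_def by auto
  have "\<forall>\<^sub>F s in at 0 within S. K * (\<Sum>i\<in>UNIV. s $ i) < 1/2"
    by (rule order_tendstoD[of _ 0]) (auto intro!: tendsto_eq_intros)
  moreover have "\<forall>\<^sub>F s in at 0 within S. s \<in> S"
    by (simp add: eventually_at_filter)
  ultimately have "\<forall>\<^sub>F s in at 0 within S. \<forall>\<omega>\<in>space M. \<xi> \<omega> / 2 \<le> \<xi> \<omega> + s \<bullet> \<eta> \<omega>"
    by eventually_elim (use S_bounds(1) assms(4,8) in \<open>blast intro: half_le_shift\<close>)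
  moreover have "integrable M (\<lambda>\<omega>. U (\<xi> \<omega> + s \<bullet> \<eta> \<omega>))" if "s \<in> S" for s
    using S_bounds[OF that] shift_ge_scaled[of s K] assms(8)
    by (intro integrable_U_shift[of "1 - K * (\<Sum>i\<in>UNIV. s $ i)"]) auto
  ultimately show ?thesis
    using second_order_expansion integrable_U1_inner integrable_U2_inner_sq
    unfolding w_def by simp
qed

end
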